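(* Let $n\ge2$, $r\ge1$, let $V_1,\dots,V_r\in\mathrm{Mat}(n,\mathbb{C})$ satisfy $\operatorname{tr}(V_s^*V_m)=\delta_{sm}$, and define $$P_{\mathcal T}=\sum_{s=1}^r\sum_{a,b,c,d=1}^n (V_s)_{ab}(\bar V_s)_{cd}\,E^{(n)}_{ac}\otimes E^{(n)}_{bd},\qquad A_{\mathcal T}=\sum_{s,m=1}^r E^{(r)}_{sm}\otimes\Big(\sum_{i=1}^r V_i\bar V_sV_m^tV_i^*\Big).$$ For $P\in\mathrm{Mat}(n^2,\mathbb{C})$ and real $Q>0$ consider the system $$P^*=P,\quad P^2=P,\quad Q^2(P_1P_2P_1-P_2P_1P_2)=P_1-P_2,\qquad(\ast)$$ with $P_1=P\otimes I_n$, $P_2=I_n\otimes P$. (a) If $P_{\mathcal T}$ is a nontrivial solution of $(\ast)$ and $k=\tfrac12\operatorname{rank}\big((P_{\mathcal T})_1-(P_{\mathcal T})_2\big)$, then for all integers $m\ge1$, $\operatorname{tr}(A_{\mathcal T}^m)=rn+(Q^{-2m}-1)k$. (b) If there exist a real $Q>1$ and a positive integer $k$ such that $\operatorname{tr}(A_{\mathcal T}^m)=rn+(Q^{-2m}-1)k$ for $m=1,2,3$, then $P_{\mathcal T}$ is a nontrivial solution of $(\ast)$ for this $Q$.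
   Context: $E^{(p)}_{ab}\in\mathrm{Mat}(p,\mathbb{C})$ is the matrix unit with $(E^{(p)}_{ab})_{ij}=\delta_{ai}\delta_{bj}$; $\bar V$ is entrywise complex conjugate, $V^t$ transpose, $V^*$ conjugate transpose; $\otimes$ is the Kronecker product. A solution of $(\ast)$ is trivial if $P=0$ or $P=I_n\otimes I_n$, nontrivial otherwise. *)

theory Defs
  imports "Jordan_Normal_Form.DL_Rank"
begin

(* Conventions: indices are 0-based (paper index a corresponds to a-1 here). *)

definition mtrace :: "complex mat \<Rightarrow> complex" where
  "mtrace A = (\<Sum>i<dim_row A. A $$ (i,i))"

definition madj :: "complex mat \<Rightarrow> complex mat" where
  "madj A = mat (dim_col A) (dim_row A) (\<lambda>(i,j). cnj (A $$ (j,i)))"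

definition mcnj :: "complex mat \<Rightarrow> complex mat" where
  "mcnj A = mat (dim_row A) (dim_col A) (\<lambda>(i,j). cnj (A $$ (i,j)))"

definition kron :: "complex mat \<Rightarrow> complex mat \<Rightarrow> complex mat" where
  "kron A B = mat (dim_row A * dim_row B) (dim_col A * dim_col B)
     (\<lambda>(i,j). A $$ (i div dim_row B, j div dim_col B) * B $$ (i mod dim_row B, j mod dim_col B))"

definition munit :: "nat \<Rightarrow> nat \<Rightarrow> nat \<Rightarrow> complex mat" where
  "munit p a b = mat p p (\<lambda>(i,j). if i = a \<and> j = b then 1 else 0)"

definition msum :: "nat \<Rightarrow> nat \<Rightarrow> ('i \<Rightarrow> complex mat) \<Rightarrow> 'i set \<Rightarrow> complex mat" where
  "msum p q f I = mat p q (\<lambda>ij. \<Sum>x\<in>I. f x $$ ij)"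

definition mrank :: "complex mat \<Rightarrow> nat" where
  "mrank A = vec_space.rank (dim_row A) A"

definition PT :: "nat \<Rightarrow> nat \<Rightarrow> (nat \<Rightarrow> complex mat) \<Rightarrow> complex mat" where
  "PT n r V = msum (n*n) (n*n)
     (\<lambda>(s,a,b,c,d). (V s $$ (a,b) * mcnj (V s) $$ (c,d)) \<cdot>\<^sub>m kron (munit n a c) (munit n b d))
     ({..<r} \<times> {..<n} \<times> {..<n} \<times> {..<n} \<times> {..<n})"

definition AT :: "nat \<Rightarrow> nat \<Rightarrow> (nat \<Rightarrow> complex mat) \<Rightarrow> complex mat" where
  "AT n r V = msum (r*n) (r*n)
     (\<lambda>(s,m). kron (munit r s m)
        (msum n n (\<lambda>i. V i * mcnj (V s) * transpose_mat (V m) * madj (V i)) {..<r}))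
     ({..<r} \<times> {..<r})"

definition P1 :: "nat \<Rightarrow> complex mat \<Rightarrow> complex mat" where
  "P1 n P = kron P (1\<^sub>m n)"

definition P2 :: "nat \<Rightarrow> complex mat \<Rightarrow> complex mat" where
  "P2 n P = kron (1\<^sub>m n) P"

definition is_solution :: "nat \<Rightarrow> real \<Rightarrow> complex mat \<Rightarrow> bool" where
  "is_solution n Q P \<longleftrightarrow> P \<in> carrier_mat (n*n) (n*n) \<and> madj P = P \<and> P * P = P \<and>
     (complex_of_real Q)^2 \<cdot>\<^sub>m (P1 n P * P2 n P * P1 n P - P2 n P * P1 n P * P2 n P)
       = P1 n P - P2 n P"

definition trivial_sol :: "nat \<Rightarrow> complex mat \<Rightarrow> bool" where
  "trivial_sol n P \<longleftrightarrow> P = 0\<^sub>m (n*n) (n*n) \<or> P = kron (1\<^sub>m n) (1\<^sub>m n)"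

definition nontrivial_solution :: "nat \<Rightarrow> real \<Rightarrow> complex mat \<Rightarrow> bool" where
  "nontrivial_solution n Q P \<longleftrightarrow> is_solution n Q P \<and> \<not> trivial_sol n P"

end

(*
  Let Vvec be the n^2 x r matrix whose columns are the row-major vectorisations of the V_s.
  Orthonormality of the V_s makes Vvec an isometry, so P_T = Vvec Vvec^* is an orthogonal
  projection.  Likewise P_1 = W W^* and P_2 = U U^* for isometries W, U from C^(rn) into C^(n^3),
  and A_T = U^* P_1 U is the compression of P_1 to the range of P_2.

  With q = Q^(-2) the system says P_1 P_2 P_1 - P_2 P_1 P_2 = q D, where D = P_1 - P_2.  Then
  A_T^2 = (1 + q) A_T - q, so all traces tr A_T^m are determined by tr A_T = tr P_1 P_2; and
  D^3 = (1 - q) D, so D^2/(1 - q) is a projection of the same rank as D, which gives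
  (1 - q) rank D = tr D^2 = 2 (rn - tr P_1 P_2).

  For (b) put E = P_1 P_2 P_1 - P_2 P_1 P_2 - q D.  By cyclicity of the trace and idempotence,
  tr E^2 is a combination of tr A_T, tr A_T^2 and tr A_T^3 which vanishes under the hypothesis;
  as E is Hermitian, E = 0.  A trivial P_T would give P_1 = P_2 and hence tr A_T = rn, which
  Q > 1 and k > 0 exclude.
*)

theory Submission
  imports Defs
begin

section \<open>Index arithmetic and matrix algebra\<close>

lemma mult_add_less_mult:
  fixes x y a b :: nat
  assumes "x < a" "y < b"
  shows "x * b + y < a * b"
proof -
  have "x * b + y < (x + 1) * b" using assms(2) by simp
  also have "\<dots> \<le> a * b" using assms(1) by (intro mult_right_mono) auto
  finally show ?thesis .
qed

lemma less_mult_imp_mod_less: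
  fixes m n i :: nat
  assumes "m < i * n"
  shows "m mod n < n"
  using assms by (cases "n = 0") auto

lemma mult_add_div_mod:
  fixes x y b :: nat
  assumes "y < b"
  shows "(x * b + y) div b = x" "(x * b + y) mod b = y"
  using assms by simp_all

lemma sum_lessThan_mult:
  fixes f :: "nat \<Rightarrow> 'a::comm_monoid_add"
  shows "(\<Sum>i<a * b. f i) = (\<Sum>x<a. \<Sum>y<b. f (x * b + y))"
proof -
  have "(\<Sum>y<b. f (x * b + y)) = sum f {x * b..<x * b + b}" for x
    using sum.shift_bounds_nat_ivl[of f 0 "x * b" b] by (simp add: atLeast0LessThan add.commute)
  then show ?thesis by (simp add: sum.nat_group[symmetric])
qed

lemma index_mult_mat_split:
  assumes "dim_col A = a * b" "dim_row B = a * b" "i < dim_row A" "j < dim_col B"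
  shows "(A * B) $$ (i, j) = (\<Sum>x<a. \<Sum>y<b. A $$ (i, x * b + y) * B $$ (x * b + y, j))"
  using assms by (simp add: scalar_prod_def atLeast0LessThan sum_lessThan_mult)

lemma smult_smult_mat: "a \<cdot>\<^sub>m (b \<cdot>\<^sub>m A) = (a * b :: 'a::semiring_1) \<cdot>\<^sub>m A"
  by (rule eq_matI) (simp_all add: mult.assoc)

lemma smult_one_mat: "(1::'a::semiring_1) \<cdot>\<^sub>m A = A"
  by (rule eq_matI) simp_all

lemma smult_mat_eq_iff:
  fixes c :: "'a::field"
  assumes "c \<noteq> 0"
  shows "c \<cdot>\<^sub>m A = B \<longleftrightarrow> A = inverse c \<cdot>\<^sub>m B"
  using assms by (auto simp: smult_smult_mat smult_one_mat)

text \<open>The ring laws of matrices with dimension equations in place of carrier hypotheses,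
  so that the simplifier can discharge them.\<close>

lemma mat_mult_assoc:
  "dim_col A = dim_row B \<Longrightarrow> dim_col B = dim_row C \<Longrightarrow> A * B * C = A * (B * C)"
  by (rule assoc_mult_mat[of A "dim_row A" "dim_col A" B "dim_col B" C "dim_col C"]) auto

lemma mat_mult_add_distrib_left:
  "dim_col A = dim_row B \<Longrightarrow> dim_row B = dim_row C \<Longrightarrow> dim_col B = dim_col C \<Longrightarrow>
   A * (B + C) = A * B + A * C"
  by (rule mult_add_distrib_mat[of A "dim_row A" "dim_col A" B "dim_col B"]) auto

lemma mat_mult_add_distrib_right:
  "dim_row A = dim_row B \<Longrightarrow> dim_col A = dim_col B \<Longrightarrow> dim_col A = dim_row C \<Longrightarrow>
   (A + B) * C = A * C + B * C"
  by (rule add_mult_distrib_mat[of A "dim_row A" "dim_col A" B C "dim_col C"]) auto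

lemma mat_mult_diff_distrib_left:
  "dim_col A = dim_row B \<Longrightarrow> dim_row B = dim_row C \<Longrightarrow> dim_col B = dim_col C \<Longrightarrow>
   (A :: 'a::comm_ring mat) * (B - C) = A * B - A * C"
  by (rule mult_minus_distrib_mat[of A "dim_row A" "dim_col A" B "dim_col B"]) auto

lemma mat_mult_diff_distrib_right:
  "dim_row A = dim_row B \<Longrightarrow> dim_col A = dim_col B \<Longrightarrow> dim_col A = dim_row C \<Longrightarrow>
   ((A :: 'a::comm_ring mat) - B) * C = A * C - B * C"
  by (rule minus_mult_distrib_mat[of A "dim_row A" "dim_col A" B C "dim_col C"]) auto

lemma mat_smult_mult_left:
  "dim_col A = dim_row B \<Longrightarrow> (c \<cdot>\<^sub>m A) * B = (c::'a::comm_ring) \<cdot>\<^sub>m (A * B)"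
  by (rule mult_smult_assoc_mat[of A "dim_row A" "dim_col A" B "dim_col B"]) auto

lemma mat_smult_mult_right:
  "dim_col A = dim_row B \<Longrightarrow> A * (c \<cdot>\<^sub>m B) = (c::'a::comm_ring) \<cdot>\<^sub>m (A * B)"
  by (rule mult_smult_distrib[of A "dim_row A" "dim_col A" B "dim_col B"]) auto

lemma diag_sum_mult_comm:
  fixes A B :: "'a::comm_semiring_0 mat"
  assumes "A \<in> carrier_mat n m" "B \<in> carrier_mat m n"
  shows "(\<Sum>i<n. (A * B) $$ (i, i)) = (\<Sum>j<m. (B * A) $$ (j, j))"
proof -
  have "(\<Sum>i<n. (A * B) $$ (i, i)) = (\<Sum>i<n. \<Sum>j<m. A $$ (i, j) * B $$ (j, i))"
    using assms by (simp add: scalar_prod_def atLeast0LessThan)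
  also have "\<dots> = (\<Sum>j<m. \<Sum>i<n. B $$ (j, i) * A $$ (i, j))"
    by (subst sum.swap) (simp add: mult.commute)
  also have "\<dots> = (\<Sum>j<m. (B * A) $$ (j, j))"
    using assms by (simp add: scalar_prod_def atLeast0LessThan)
  finally show ?thesis .
qed

lemma mtrace_mult_comm:
  assumes "A \<in> carrier_mat n m" "B \<in> carrier_mat m n"
  shows "mtrace (A * B) = mtrace (B * A)"
proof -
  have "dim_row (A * B) = n" "dim_row (B * A) = m" using assms by auto
  then show ?thesis unfolding mtrace_def using diag_sum_mult_comm[OF assms] by (simp only:)
qed

lemma mtrace_one [simp]: "mtrace (1\<^sub>m k) = of_nat k"
  unfolding mtrace_def by simp

lemma mtrace_zero [simp]: "mtrace (0\<^sub>m k k) = 0"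
  unfolding mtrace_def by simp

lemma mtrace_add:
  "dim_row A = dim_row B \<Longrightarrow> dim_col A = dim_col B \<Longrightarrow> dim_row A = dim_col A \<Longrightarrow>
   mtrace (A + B) = mtrace A + mtrace B"
  unfolding mtrace_def by (auto simp: sum.distrib)

lemma mtrace_diff:
  "dim_row A = dim_row B \<Longrightarrow> dim_col A = dim_col B \<Longrightarrow> dim_row A = dim_col A \<Longrightarrow>
   mtrace (A - B) = mtrace A - mtrace B"
  unfolding mtrace_def by (auto simp: sum_subtractf)

lemma mtrace_smult: "dim_row A = dim_col A \<Longrightarrow> mtrace (c \<cdot>\<^sub>m A) = c * mtrace A"
  unfolding mtrace_def by (auto simp: sum_distrib_left)

lemma madj_dim [simp]: "dim_row (madj A) = dim_col A" "dim_col (madj A) = dim_row A"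
  unfolding madj_def by auto

lemma madj_index [simp]:
  "i < dim_col A \<Longrightarrow> j < dim_row A \<Longrightarrow> madj A $$ (i, j) = cnj (A $$ (j, i))"
  unfolding madj_def by auto

lemma madj_carrier: "A \<in> carrier_mat a b \<Longrightarrow> madj A \<in> carrier_mat b a"
  unfolding carrier_mat_def by simp

lemma madj_madj [simp]: "madj (madj A) = A"
  by (rule eq_matI) simp_all

lemma madj_mult: "dim_col A = dim_row B \<Longrightarrow> madj (A * B) = madj B * madj A"
  by (rule eq_matI) (simp_all add: scalar_prod_def cnj_sum mult.commute)

lemma madj_diff:
  "dim_row A = dim_row B \<Longrightarrow> dim_col A = dim_col B \<Longrightarrow> madj (A - B) = madj A - madj B"
  by (rule eq_matI) simp_all

lemma madj_smult: "madj (c \<cdot>\<^sub>m A) = cnj c \<cdot>\<^sub>m madj A"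
  by (rule eq_matI) simp_all

lemma madj_one [simp]: "madj (1\<^sub>m k) = 1\<^sub>m k"
  by (rule eq_matI) simp_all

lemma index_mult_madj:
  "A \<in> carrier_mat a m \<Longrightarrow> B \<in> carrier_mat b m \<Longrightarrow> i < a \<Longrightarrow> j < b \<Longrightarrow>
   (A * madj B) $$ (i, j) = (\<Sum>k<m. A $$ (i, k) * cnj (B $$ (j, k)))"
  by (simp add: scalar_prod_def atLeast0LessThan)

lemma index_madj_mult:
  "A \<in> carrier_mat m a \<Longrightarrow> B \<in> carrier_mat m b \<Longrightarrow> i < a \<Longrightarrow> j < b \<Longrightarrow>
   (madj A * B) $$ (i, j) = (\<Sum>k<m. cnj (A $$ (k, i)) * B $$ (k, j))"
  by (simp add: scalar_prod_def atLeast0LessThan)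

lemma mtrace_madj_mult_self:
  "mtrace (madj Z * Z) = of_real (\<Sum>i<dim_col Z. \<Sum>k<dim_row Z. (cmod (Z $$ (k, i)))\<^sup>2)"
proof -
  have "mtrace (madj Z * Z) = (\<Sum>i<dim_col Z. \<Sum>k<dim_row Z. cnj (Z $$ (k, i)) * Z $$ (k, i))"
    unfolding mtrace_def by (auto simp: scalar_prod_def intro!: sum.cong)
  also have "\<dots> = (\<Sum>i<dim_col Z. \<Sum>k<dim_row Z. of_real ((cmod (Z $$ (k, i)))\<^sup>2))"
    by (intro sum.cong refl) (simp only: complex_norm_square mult.commute)
  finally show ?thesis by simp
qed

lemma hermitian_eq_0_if_mtrace_square_eq_0:
  assumes "madj Z = Z" "mtrace (Z * Z) = 0"
  shows "Z = 0\<^sub>m (dim_row Z) (dim_col Z)"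
proof (rule eq_matI)
  fix k i assume k: "k < dim_row (0\<^sub>m (dim_row Z) (dim_col Z))"
    and i: "i < dim_col (0\<^sub>m (dim_row Z) (dim_col Z))"
  have "(\<Sum>i<dim_col Z. \<Sum>k<dim_row Z. (cmod (Z $$ (k, i)))\<^sup>2) = 0"
    using assms mtrace_madj_mult_self[of Z] of_real_eq_0_iff by metis
  then have "(\<Sum>k<dim_row Z. (cmod (Z $$ (k, i)))\<^sup>2) = 0"
    using i by (subst (asm) sum_nonneg_eq_0_iff) (auto intro: sum_nonneg)
  then have "(cmod (Z $$ (k, i)))\<^sup>2 = 0"
    using k by (subst (asm) sum_nonneg_eq_0_iff) auto
  then show "Z $$ (k, i) = 0\<^sub>m (dim_row Z) (dim_col Z) $$ (k, i)" using k i by simp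
qed simp_all

lemma mcnj_dim [simp]: "dim_row (mcnj A) = dim_row A" "dim_col (mcnj A) = dim_col A"
  unfolding mcnj_def by simp_all

lemma mcnj_index [simp]: "i < dim_row A \<Longrightarrow> j < dim_col A \<Longrightarrow> mcnj A $$ (i, j) = cnj (A $$ (i, j))"
  unfolding mcnj_def by simp

lemma madj_mcnj: "madj (mcnj A) = transpose_mat A"
  by (rule eq_matI) simp_all

lemma munit_dim [simp]: "dim_row (munit p a b) = p" "dim_col (munit p a b) = p"
  unfolding munit_def by simp_all

lemma munit_index [simp]:
  "i < p \<Longrightarrow> j < p \<Longrightarrow> munit p a b $$ (i, j) = (if i = a \<and> j = b then 1 else 0)"
  unfolding munit_def by simp

lemma msum_dim [simp]: "dim_row (msum p q f I) = p" "dim_col (msum p q f I) = q"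
  unfolding msum_def by simp_all

lemma msum_index [simp]: "i < p \<Longrightarrow> j < q \<Longrightarrow> msum p q f I $$ (i, j) = (\<Sum>x\<in>I. f x $$ (i, j))"
  unfolding msum_def by simp

lemma kron_dim [simp]:
  "dim_row (kron A B) = dim_row A * dim_row B" "dim_col (kron A B) = dim_col A * dim_col B"
  unfolding kron_def by simp_all

lemma kron_index [simp]:
  "i < dim_row A * dim_row B \<Longrightarrow> j < dim_col A * dim_col B \<Longrightarrow>
   kron A B $$ (i, j) = A $$ (i div dim_row B, j div dim_col B) * B $$ (i mod dim_row B, j mod dim_col B)"
  unfolding kron_def by simp

lemma kron_mult:
  assumes "dim_col A = dim_row C" "dim_col B = dim_row D"
  shows "kron A B * kron C D = kron (A * C) (B * D)"
proof (rule eq_matI)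
  fix i j assume "i < dim_row (kron (A * C) (B * D))" "j < dim_col (kron (A * C) (B * D))"
  then have i: "i < dim_row A * dim_row B" and j: "j < dim_col C * dim_col D" by simp_all
  have "(kron A B * kron C D) $$ (i, j) = (\<Sum>p<dim_col A. \<Sum>t<dim_col B.
      kron A B $$ (i, p * dim_col B + t) * kron C D $$ (p * dim_col B + t, j))"
    using i j assms by (intro index_mult_mat_split) simp_all
  also have "\<dots> = (\<Sum>p<dim_col A. \<Sum>t<dim_col B.
      (A $$ (i div dim_row B, p) * C $$ (p, j div dim_col D)) * (B $$ (i mod dim_row B, t) * D $$ (t, j mod dim_col D)))"
  proof (intro sum.cong refl)
    fix p t assume "p \<in> {..<dim_col A}" "t \<in> {..<dim_col B}"
    then have "p * dim_col B + t < dim_col A * dim_col B" by (simp add: mult_add_less_mult)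
    then show "kron A B $$ (i, p * dim_col B + t) * kron C D $$ (p * dim_col B + t, j) =
      (A $$ (i div dim_row B, p) * C $$ (p, j div dim_col D)) * (B $$ (i mod dim_row B, t) * D $$ (t, j mod dim_col D))"
      using i j assms \<open>t \<in> {..<dim_col B}\<close> by (simp add: mult_ac)
  qed
  also have "\<dots> = kron (A * C) (B * D) $$ (i, j)"
    using i j assms less_mult_imp_div_less[OF i] less_mult_imp_div_less[OF j]
      less_mult_imp_mod_less[OF i] less_mult_imp_mod_less[OF j]
    by (simp add: sum_product[symmetric] scalar_prod_def atLeast0LessThan)
  finally show "(kron A B * kron C D) $$ (i, j) = kron (A * C) (B * D) $$ (i, j)" .
qed simp_all

lemma madj_kron: "madj (kron A B) = kron (madj A) (madj B)"
proof (rule eq_matI)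
  fix i j assume "i < dim_row (kron (madj A) (madj B))" "j < dim_col (kron (madj A) (madj B))"
  then have i: "i < dim_col A * dim_col B" and j: "j < dim_row A * dim_row B" by simp_all
  show "madj (kron A B) $$ (i, j) = kron (madj A) (madj B) $$ (i, j)"
    using i j less_mult_imp_div_less[OF i] less_mult_imp_div_less[OF j]
      less_mult_imp_mod_less[OF i] less_mult_imp_mod_less[OF j] by simp
qed simp_all

lemma kron_one: "kron (1\<^sub>m a) (1\<^sub>m b) = 1\<^sub>m (a * b)"
proof (rule eq_matI)
  fix i j assume "i < dim_row (1\<^sub>m (a * b))" "j < dim_col (1\<^sub>m (a * b))"
  then have i: "i < a * b" and j: "j < a * b" by simp_all
  have "(i div b = j div b \<and> i mod b = j mod b) = (i = j)"
    by (metis div_mult_mod_eq)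
  then show "kron (1\<^sub>m a) (1\<^sub>m b) $$ (i, j) = 1\<^sub>m (a * b) $$ (i, j)"
    using i j less_mult_imp_div_less[OF i] less_mult_imp_div_less[OF j]
      less_mult_imp_mod_less[OF i] less_mult_imp_mod_less[OF j] by auto
qed simp_all

section \<open>Rank and trace\<close>

context vec_space
begin

lemma mult_mat_vec_in_span_cols:
  assumes A: "A \<in> carrier_mat n k" and v: "v \<in> carrier_vec k"
  shows "A *\<^sub>v v \<in> span (set (cols A))"
proof -
  have "\<forall>w\<in>set (cols A). dim_vec w = n" using A by (auto simp: cols_def)
  then have "lincomb_list (\<lambda>i. v $ i) (cols A) = mat_of_cols n (cols A) *\<^sub>v vec (length (cols A)) (\<lambda>i. v $ i)"
    by (rule lincomb_list_as_mat_mult)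
  also have "\<dots> = A *\<^sub>v v"
  proof -
    have "mat_of_cols n (cols A) = A" using A mat_of_cols_cols[of A] by auto
    moreover have "vec (length (cols A)) (\<lambda>i. v $ i) = v" using A v by auto
    ultimately show ?thesis by simp
  qed
  finally have "A *\<^sub>v v \<in> span_list (cols A)"
    unfolding span_list_def by (metis (mono_tags, lifting) mem_Collect_eq)
  moreover have "set (cols A) \<subseteq> carrier_vec n" using A cols_dim by blast
  ultimately show ?thesis using span_list_as_span by blast
qed

lemma rank_mult_left_le:
  assumes A: "A \<in> carrier_mat n k" and B: "B \<in> carrier_mat k m"
  shows "rank (A * B) \<le> rank A"
proof -
  define W where "W = span (set (cols A))"
  have cA: "set (cols A) \<subseteq> carrier_vec n" using A cols_dim by blast
  have AB: "A * B \<in> carrier_mat n m" using A B by auto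
  have cAB: "set (cols (A * B)) \<subseteq> carrier_vec n" using AB cols_dim by blast
  have "set (cols (A * B)) \<subseteq> W"
  proof
    fix x assume "x \<in> set (cols (A * B))"
    then obtain j where j: "j < m" "x = col (A * B) j" using AB
      by (metis cols_length cols_nth carrier_matD(2) in_set_conv_nth)
    then have "x = A *\<^sub>v col B j" using A B by auto
    then show "x \<in> W" unfolding W_def using mult_mat_vec_in_span_cols[OF A, of "col B j"] B j by auto
  qed
  have sW: "subspace class_ring W V" unfolding W_def using cA span_is_subspace by auto
  then have "span (set (cols (A * B))) \<subseteq> W"
    using \<open>set (cols (A * B)) \<subseteq> W\<close> cA cAB span_is_subset subspace_def by blast
  have "subspace class_ring (span (set (cols (A * B)))) V" using cAB span_is_subspace by auto
  then have sub: "subspace class_ring (span (set (cols (A * B)))) (vs W)"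
    using nested_subspaces[OF sW] \<open>span (set (cols (A * B))) \<subseteq> W\<close> by blast
  have fW: "vectorspace.fin_dim class_ring (vs W)" unfolding W_def using fin_dim_span_cols[OF A] .
  have "vectorspace.fin_dim class_ring (span_vs (set (cols (A * B))))" using fin_dim_span_cols[OF AB] .
  then have "rank (A * B) \<le> vectorspace.dim class_ring (vs W)" unfolding rank_def
    using vectorspace.subspace_dim[OF subspace_is_vs[OF sW] sub fW] by auto
  then show ?thesis unfolding rank_def W_def .
qed

lemma cols_subset_span_maximal_lin_indpt:
  assumes A: "A \<in> carrier_mat n m" and max: "maximal S (\<lambda>T. T \<subseteq> set (cols A) \<and> lin_indpt T)"
  shows "set (cols A) \<subseteq> span S"
proof
  fix w assume w: "w \<in> set (cols A)"
  have SA: "S \<subseteq> set (cols A)" and li: "lin_indpt S" using max unfolding maximal_def by auto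
  have Sc: "S \<subseteq> carrier_vec n" and wc: "w \<in> carrier_vec n" using SA w A cols_dim by blast+
  show "w \<in> span S"
  proof (rule ccontr)
    assume ns: "w \<notin> span S"
    then have "w \<notin> S" using in_own_span[OF Sc] by blast
    then have "lin_indpt (S \<union> {w})" using lin_dep_iff_in_span[OF Sc li wc] ns by blast
    then have "S \<union> {w} = S" using max SA w unfolding maximal_def by blast
    then show False using \<open>w \<notin> S\<close> by blast
  qed
qed

lemma rank_factorization:
  assumes A: "A \<in> carrier_mat n m"
  obtains B C where "B \<in> carrier_mat n (rank A)" "C \<in> carrier_mat (rank A) m" "A = B * C"
    "set (cols B) \<subseteq> set (cols A)" "distinct (cols B)" "lin_indpt (set (cols B))"
proof -
  obtain S where max: "maximal S (\<lambda>T. T \<subseteq> set (cols A) \<and> lin_indpt T)"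
    using maximal_exists[of "\<lambda>T. T \<subseteq> set (cols A) \<and> lin_indpt T" "card (set (cols A))" "{}"]
    by (meson List.finite_set card_mono empty_iff empty_subsetI finite_lin_indpt2 rev_finite_subset)
  have SA: "S \<subseteq> set (cols A)" and li: "lin_indpt S" using max unfolding maximal_def by auto
  have Sc: "S \<subseteq> carrier_vec n" using SA A cols_dim by blast
  obtain xs where xs: "set xs = S" "distinct xs" using finite_distinct_list[of S] SA finite_subset by blast
  have k: "length xs = rank A" using rank_card_indpt[OF A max] xs distinct_card by metis
  define B where "B = mat_of_cols n xs"
  have cB: "cols B = xs" unfolding B_def using cols_mat_of_cols xs Sc by metis
  have "\<exists>c. col A j = B *\<^sub>v vec (rank A) c" if j: "j < m" for j
  proof -
    have "col A j \<in> set (cols A)" using j A by (metis cols_length cols_nth carrier_matD(2) nth_mem)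
    then have "col A j \<in> span_list xs"
      using cols_subset_span_maximal_lin_indpt[OF A max] span_list_as_span[of xs] xs Sc by auto
    then obtain c where "col A j = lincomb_list c xs" unfolding span_list_def by auto
    also have "\<dots> = B *\<^sub>v vec (rank A) c" unfolding B_def k[symmetric]
      by (rule lincomb_list_as_mat_mult) (use xs Sc in auto)
    finally show ?thesis by blast
  qed
  then obtain cf where cf: "\<And>j. j < m \<Longrightarrow> col A j = B *\<^sub>v vec (rank A) (cf j)" by metis
  define C where "C = mat (rank A) m (\<lambda>(i, j). cf j i)"
  have B: "B \<in> carrier_mat n (rank A)" and C: "C \<in> carrier_mat (rank A) m"
    unfolding B_def C_def k[symmetric] by auto
  have "A = B * C"
  proof (rule mat_col_eqI)
    fix j assume "j < dim_col (B * C)"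
    then have j: "j < m" using C by auto
    show "col A j = col (B * C) j" using cf[OF j] col_mult2[OF B C j] j unfolding C_def by simp
  qed (use A B C in auto)
  then show thesis using that B C cB xs SA li by simp
qed

lemma mult_left_cancel_lin_indpt_cols:
  assumes B: "B \<in> carrier_mat n k" and dist: "distinct (cols B)" and li: "lin_indpt (set (cols B))"
    and X: "X \<in> carrier_mat k m" and Y: "Y \<in> carrier_mat k m" and eq: "B * X = B * Y"
  shows "X = Y"
proof (rule mat_col_eqI)
  fix j assume "j < dim_col Y"
  then have j: "j < m" using Y by simp
  define w where "w = col X j - col Y j"
  have cX: "col X j \<in> carrier_vec k" and cY: "col Y j \<in> carrier_vec k" using X Y by auto
  have "B *\<^sub>v w = B *\<^sub>v col X j - B *\<^sub>v col Y j"
    unfolding w_def using mult_minus_distrib_mat_vec[OF B cX cY] .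
  also have "B *\<^sub>v col X j = B *\<^sub>v col Y j" by (metis col_mult2[OF B X j] col_mult2[OF B Y j] eq)
  also have "B *\<^sub>v col Y j - B *\<^sub>v col Y j = 0\<^sub>v n" using B cY by simp
  finally have Bw: "B *\<^sub>v w = 0\<^sub>v n" .
  have w0: "w = 0\<^sub>v k"
  proof (rule ccontr)
    assume "w \<noteq> 0\<^sub>v k"
    then have "lin_dep (set (cols B))" using lin_depI[OF B _ _ Bw dist] cX cY unfolding w_def by simp
    then show False using li by simp
  qed
  show "col X j = col Y j"
  proof (rule eq_vecI)
    fix i assume i: "i < dim_vec (col Y j)"
    then have "w $ i = 0" using w0 Y by auto
    then show "col X j $ i = col Y j $ i" using i cX cY unfolding w_def by simp
  qed (use X Y in simp)
qed (use X Y in auto)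

lemma rank_idempotent:
  assumes R: "R \<in> carrier_mat n n" and idem: "R * R = R"
  shows "of_nat (rank R) = (\<Sum>i<n. R $$ (i, i))"
proof -
  obtain B C where B: "B \<in> carrier_mat n (rank R)" and C: "C \<in> carrier_mat (rank R) n"
    and RBC: "R = B * C" and BR: "set (cols B) \<subseteq> set (cols R)"
    and dist: "distinct (cols B)" and li: "lin_indpt (set (cols B))"
    using rank_factorization[OF R] by blast
  have RB: "R * B = B"
  proof (rule mat_col_eqI)
    fix i assume "i < dim_col B"
    then have i: "i < rank R" using B by auto
    have "col B i \<in> set (cols R)" using BR B i by (metis cols_length cols_nth carrier_matD(2) nth_mem subsetD)
    then obtain j where j: "j < n" "col B i = col R j" using R
      by (metis cols_length cols_nth carrier_matD(2) in_set_conv_nth)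
    have "col (R * B) i = R *\<^sub>v col R j" using col_mult2[OF R B i] j by simp
    also have "\<dots> = col R j" using col_mult2[OF R R j(1)] idem by simp
    finally show "col (R * B) i = col B i" using j by simp
  qed (use R B in auto)
  have "B * (C * B) = B * 1\<^sub>m (rank R)"
    using RB RBC assoc_mult_mat[OF B C B] B by simp
  then have CB: "C * B = 1\<^sub>m (rank R)"
    using mult_left_cancel_lin_indpt_cols[OF B dist li] B C by (meson mult_carrier_mat one_carrier_mat)
  have "(\<Sum>i<n. R $$ (i, i)) = (\<Sum>j<rank R. (C * B) $$ (j, j))"
    using diag_sum_mult_comm[OF B C] RBC by simp
  then show ?thesis unfolding CB by simp
qed

end

lemma mrank_idempotent:
  assumes "R \<in> carrier_mat n n" "R * R = R"
  shows "of_nat (mrank R) = mtrace R"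
  using vec_space.rank_idempotent[OF assms] assms(1) unfolding mrank_def mtrace_def by simp

lemma mrank_mult_eq_mtrace_square_if_cube:
  assumes D: "D \<in> carrier_mat n n" and herm: "madj D = D" and cube: "D * (D * D) = l \<cdot>\<^sub>m D"
  shows "of_nat (mrank D) * l = mtrace (D * D)"
proof (cases "l = 0")
  case False
  txt \<open>\<open>D\<^sup>2 / l\<close> is idempotent and has the same column space as \<open>D\<close>.\<close>
  define R where "R = inverse l \<cdot>\<^sub>m (D * D)"
  have R: "R \<in> carrier_mat n n" unfolding R_def using D by simp
  have "R * R = inverse l \<cdot>\<^sub>m (inverse l \<cdot>\<^sub>m (D * (D * (D * D))))"
    unfolding R_def using D by (simp add: mat_smult_mult_left mat_smult_mult_right mat_mult_assoc)
  also have "\<dots> = R" unfolding R_def using D cube False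
    by (simp add: mat_smult_mult_right smult_smult_mat)
  finally have idem: "R * R = R" .
  have "R = D * (inverse l \<cdot>\<^sub>m D)" unfolding R_def using D by (simp add: mat_smult_mult_right)
  then have "vec_space.rank n R \<le> vec_space.rank n D"
    using vec_space.rank_mult_left_le[OF D, of "inverse l \<cdot>\<^sub>m D" n] D by simp
  moreover have "R * D = D" unfolding R_def using D cube False
    by (simp add: mat_smult_mult_left mat_mult_assoc smult_smult_mat smult_one_mat)
  then have "vec_space.rank n D \<le> vec_space.rank n R"
    using vec_space.rank_mult_left_le[OF R D] by simp
  ultimately have "mrank D = mrank R" using D R unfolding mrank_def by simp
  then have "of_nat (mrank D) = inverse l * mtrace (D * D)"
    using mrank_idempotent[OF R idem] unfolding R_def using D by (simp add: mtrace_smult)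
  then show ?thesis using False by simp
next
  case True
  have "D * (D * D) = 0\<^sub>m n n" using cube True D by (intro eq_matI) auto
  then have "(D * D) * (D * D) = 0\<^sub>m n n" using D by (simp add: mat_mult_assoc)
  moreover have "madj (D * D) = D * D" using D herm by (simp add: madj_mult)
  ultimately have "D * D = 0\<^sub>m n n"
    using hermitian_eq_0_if_mtrace_square_eq_0[of "D * D"] D by simp
  then show ?thesis using True by simp
qed

lemma mtrace_power_if_quadratic:
  assumes A: "A \<in> carrier_mat N N"
    and quadratic: "A * A = (1 + q) \<cdot>\<^sub>m A - q \<cdot>\<^sub>m 1\<^sub>m N"
    and mtrace_A: "mtrace A = of_nat N + (q - 1) * k"
  shows "mtrace (A ^\<^sub>m m) = of_nat N + (q ^ m - 1) * k"
proof -
  have step: "A ^\<^sub>m Suc (Suc j) = (1 + q) \<cdot>\<^sub>m A ^\<^sub>m Suc j - q \<cdot>\<^sub>m A ^\<^sub>m j" for j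
  proof -
    have "A ^\<^sub>m Suc (Suc j) = A ^\<^sub>m j * (A * A)" using A by (simp add: mat_mult_assoc)
    also have "\<dots> = (1 + q) \<cdot>\<^sub>m (A ^\<^sub>m j * A) - q \<cdot>\<^sub>m A ^\<^sub>m j"
      unfolding quadratic using A by (simp add: mat_mult_diff_distrib_left mat_smult_mult_right)
    finally show ?thesis by simp
  qed
  have "mtrace (A ^\<^sub>m m) = of_nat N + (q ^ m - 1) * k \<and>
        mtrace (A ^\<^sub>m Suc m) = of_nat N + (q ^ Suc m - 1) * k"
  proof (induction m)
    case 0
    show ?case using A mtrace_A by simp
  next
    case (Suc m)
    have "mtrace (A ^\<^sub>m Suc (Suc m)) = (1 + q) * mtrace (A ^\<^sub>m Suc m) - q * mtrace (A ^\<^sub>m m)"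
      unfolding step using A by (simp add: mtrace_diff mtrace_smult del: pow_mat.simps)
    also have "\<dots> = (1 + q) * (of_nat N + (q ^ Suc m - 1) * k) - q * (of_nat N + (q ^ m - 1) * k)"
      using Suc.IH by (simp only:)
    also have "\<dots> = of_nat N + (q ^ Suc (Suc m) - 1) * k"
      by (simp add: algebra_simps)
    finally show ?case using Suc.IH by simp
  qed
  then show ?thesis by simp
qed

section \<open>Two projections, one of them given by an isometry\<close>

lemma isometry_projection:
  assumes X: "X \<in> carrier_mat m k" and isometry: "madj X * X = 1\<^sub>m k"
  shows "madj (X * madj X) = X * madj X"
    and "(X * madj X) * (X * madj X) = X * madj X"
    and "mtrace (X * madj X) = of_nat k"
proof -
  show "madj (X * madj X) = X * madj X" using X by (simp add: madj_mult)
  have "(X * madj X) * (X * madj X) = X * ((madj X * X) * madj X)"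
    using X by (simp add: mat_mult_assoc)
  then show "(X * madj X) * (X * madj X) = X * madj X"
    using isometry X by (simp add: left_mult_one_mat')
  show "mtrace (X * madj X) = of_nat k"
    using mtrace_mult_comm[OF X madj_carrier[OF X]] isometry by simp
qed

locale projection_pair =
  fixes M N :: nat and P R U :: "complex mat"
  assumes P_carrier: "P \<in> carrier_mat M M" and U_carrier: "U \<in> carrier_mat M N"
    and U_isometry: "madj U * U = 1\<^sub>m N" and U_madj_U: "U * madj U = R"
    and P_hermitian: "madj P = P" and P_idempotent: "P * P = P"
    and mtrace_P: "mtrace P = of_nat N"
begin

text \<open>The relation \<open>P R P - R P R = q (P - R)\<close> below is the system divided by \<open>Q\<^sup>2\<close>,
  with \<open>q = Q\<^sup>-\<^sup>2\<close>.\<close>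

definition A :: "complex mat" where "A = madj U * P * U"

definition D :: "complex mat" where "D = P - R"

lemma R_carrier: "R \<in> carrier_mat M M"
  using U_madj_U U_carrier by auto

lemma dims [simp]:
  "dim_row P = M" "dim_col P = M" "dim_row R = M" "dim_col R = M"
  "dim_row U = M" "dim_col U = N" "dim_row A = N" "dim_col A = N" "dim_row D = M" "dim_col D = M"
  using P_carrier R_carrier U_carrier unfolding A_def D_def by auto

lemma A_carrier: "A \<in> carrier_mat N N" and D_carrier: "D \<in> carrier_mat M M"
  by (simp_all add: carrier_matI)

lemma U_madj_U_mult: "dim_row Z = M \<Longrightarrow> U * (madj U * Z) = R * Z"
  using mat_mult_assoc[of U "madj U" Z] U_madj_U by simp

lemma madj_U_R: "madj U * R = madj U"
  using U_madj_U mat_mult_assoc[of "madj U" U "madj U"] U_isometry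
  by (simp add: left_mult_one_mat')

lemma R_U: "R * U = U"
  using U_madj_U mat_mult_assoc[of U "madj U" U] U_isometry by simp

lemma madj_U_R_mult: "dim_row Z = M \<Longrightarrow> madj U * (R * Z) = madj U * Z"
  using mat_mult_assoc[of "madj U" R Z] madj_U_R by simp

lemma R_hermitian: "madj R = R" and R_idempotent: "R * R = R" and mtrace_R: "mtrace R = of_nat N"
  using isometry_projection[OF U_carrier U_isometry] unfolding U_madj_U by simp_all

lemma P_mult_P_mult: "dim_row Z = M \<Longrightarrow> P * (P * Z) = P * Z"
  using mat_mult_assoc[of P P Z] P_idempotent by simp

lemma R_mult_R_mult: "dim_row Z = M \<Longrightarrow> R * (R * Z) = R * Z"
  using mat_mult_assoc[of R R Z] R_idempotent by simp

lemma mtrace_mult_comm_square: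
  "dim_row X = M \<Longrightarrow> dim_col X = M \<Longrightarrow> dim_row Y = M \<Longrightarrow> dim_col Y = M \<Longrightarrow>
   mtrace (X * Y) = mtrace (Y * X)"
  by (rule mtrace_mult_comm) (auto intro: carrier_matI)

lemma mtrace_madj_U_mult_U:
  assumes "dim_row Z = M" "dim_col Z = M"
  shows "mtrace (madj U * (Z * U)) = mtrace (Z * R)"
proof -
  have "mtrace (madj U * (Z * U)) = mtrace ((Z * U) * madj U)"
    by (rule mtrace_mult_comm[of _ N M]) (rule carrier_matI; simp add: assms)+
  then show ?thesis using mat_mult_assoc[of Z U "madj U"] U_madj_U assms by simp
qed

lemma mtrace_A: "mtrace A = mtrace (P * R)"
  using mtrace_madj_U_mult_U[of P] unfolding A_def by (simp add: mat_mult_assoc)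

lemma D_hermitian: "madj D = D"
  unfolding D_def by (simp add: madj_diff P_hermitian R_hermitian)

lemma D_square: "D * D = P + R - P * R - R * P"
  unfolding D_def
  by (rule eq_matI) (simp_all del: index_mult_mat add: mat_mult_diff_distrib_left
      mat_mult_diff_distrib_right index_mult_mat(2,3) P_idempotent R_idempotent)

lemma mtrace_D_square: "mtrace (D * D) = 2 * of_nat N - 2 * mtrace (P * R)"
proof -
  have "mtrace (D * D) = mtrace P + mtrace R - mtrace (P * R) - mtrace (R * P)"
    unfolding D_square by (simp add: mtrace_add mtrace_diff)
  then show ?thesis using mtrace_mult_comm_square[of R P] mtrace_P mtrace_R by simp
qed

lemma relation_rotated:
  assumes relation: "P * R * P - R * P * R = q \<cdot>\<^sub>m D"
  shows "P * (R * P) = R * (P * R) + q \<cdot>\<^sub>m D"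
proof (rule eq_matI)
  fix i j assume "i < dim_row (R * (P * R) + q \<cdot>\<^sub>m D)" "j < dim_col (R * (P * R) + q \<cdot>\<^sub>m D)"
  then have ij: "i < M" "j < M" by simp_all
  have "(P * R * P - R * P * R) $$ (i, j) = (q \<cdot>\<^sub>m D) $$ (i, j)" using relation by simp
  then show "(P * (R * P)) $$ (i, j) = (R * (P * R) + q \<cdot>\<^sub>m D) $$ (i, j)"
    using ij by (simp del: index_mult_mat add: index_mult_mat(2,3) mat_mult_assoc algebra_simps)
qed simp_all

lemma A_square:
  assumes relation: "P * R * P - R * P * R = q \<cdot>\<^sub>m D"
  shows "A * A = (1 + q) \<cdot>\<^sub>m A - q \<cdot>\<^sub>m 1\<^sub>m N"
proof -
  have "A * A = madj U * ((P * (R * P)) * U)"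
    unfolding A_def by (simp add: mat_mult_assoc U_madj_U_mult)
  also have "\<dots> = madj U * (R * (P * (R * U))) + q \<cdot>\<^sub>m (madj U * (P * U) - madj U * (R * U))"
    unfolding relation_rotated[OF relation] D_def
    by (simp add: mat_mult_add_distrib_right mat_mult_diff_distrib_right mat_mult_add_distrib_left
        mat_mult_diff_distrib_left mat_smult_mult_left mat_smult_mult_right mat_mult_assoc)
  also have "\<dots> = A + q \<cdot>\<^sub>m (A - 1\<^sub>m N)"
    unfolding A_def by (simp add: madj_U_R_mult R_U U_isometry mat_mult_assoc)
  also have "\<dots> = (1 + q) \<cdot>\<^sub>m A - q \<cdot>\<^sub>m 1\<^sub>m N"
    by (rule eq_matI) (simp_all add: algebra_simps)
  finally show ?thesis .
qed

lemma D_cube: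
  assumes relation: "P * R * P - R * P * R = q \<cdot>\<^sub>m D"
  shows "D * (D * D) = (1 - q) \<cdot>\<^sub>m D"
proof -
  have "D * (D * D) = (P - P * (R * P)) - (R - R * (P * R))"
    unfolding D_square unfolding D_def
    by (rule eq_matI) (simp_all del: index_mult_mat add: index_mult_mat(2,3) mat_mult_diff_distrib_right
        mat_mult_add_distrib_left mat_mult_diff_distrib_left P_idempotent R_idempotent P_mult_P_mult R_mult_R_mult)
  also have "\<dots> = (1 - q) \<cdot>\<^sub>m D"
    unfolding relation_rotated[OF relation]
    by (rule eq_matI) (simp_all del: index_mult_mat add: index_mult_mat(2,3) D_def algebra_simps)
  finally show ?thesis .
qed

theorem mtrace_A_power_if_relation:
  assumes relation: "P * R * P - R * P * R = q \<cdot>\<^sub>m D"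
  shows "mtrace (A ^\<^sub>m m) = of_nat N + (q ^ m - 1) * (of_nat (mrank D) / 2)"
proof (rule mtrace_power_if_quadratic[OF _ A_square[OF relation]])
  have "of_nat (mrank D) * (1 - q) = 2 * of_nat N - 2 * mtrace (P * R)"
    using mrank_mult_eq_mtrace_square_if_cube[OF D_carrier D_hermitian D_cube[OF relation]] mtrace_D_square
    by simp
  then show "mtrace A = of_nat N + (q - 1) * (of_nat (mrank D) / 2)"
    using mtrace_A by (simp add: field_simps)
qed (rule A_carrier)

lemma mtrace_A_powers:
  "mtrace (A ^\<^sub>m 1) = mtrace (P * R)"
  "mtrace (A ^\<^sub>m 2) = mtrace (P * (R * (P * R)))"
  "mtrace (A ^\<^sub>m 3) = mtrace (P * (R * (P * (R * (P * R)))))"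
proof -
  show "mtrace (A ^\<^sub>m 1) = mtrace (P * R)"
    using mtrace_A by (simp add: left_mult_one_mat')
  have "A ^\<^sub>m 2 = madj U * ((P * (R * P)) * U)"
    unfolding A_def by (simp add: numeral_2_eq_2 left_mult_one_mat' mat_mult_assoc U_madj_U_mult)
  then show "mtrace (A ^\<^sub>m 2) = mtrace (P * (R * (P * R)))"
    using mtrace_madj_U_mult_U[of "P * (R * P)"] by (simp add: mat_mult_assoc)
  have "A ^\<^sub>m 3 = madj U * ((P * (R * (P * (R * P)))) * U)"
    unfolding A_def by (simp add: numeral_3_eq_3 left_mult_one_mat' mat_mult_assoc U_madj_U_mult)
  then show "mtrace (A ^\<^sub>m 3) = mtrace (P * (R * (P * (R * (P * R)))))"
    using mtrace_madj_U_mult_U[of "P * (R * (P * (R * P)))"] by (simp add: mat_mult_assoc)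
qed

lemma mtrace_alternating_words:
  "mtrace (R * P) = mtrace (P * R)"
  "mtrace (P * (R * P)) = mtrace (P * R)"
  "mtrace (R * (P * R)) = mtrace (P * R)"
  "mtrace (R * (P * (R * P))) = mtrace (P * (R * (P * R)))"
  "mtrace (P * (R * (P * (R * P)))) = mtrace (P * (R * (P * R)))"
  "mtrace (R * (P * (R * (P * R)))) = mtrace (P * (R * (P * R)))"
  "mtrace (R * (P * (R * (P * (R * P))))) = mtrace (P * (R * (P * (R * (P * R)))))"
proof -
  note rotate = mtrace_mult_comm_square
  show QP: "mtrace (R * P) = mtrace (P * R)" by (rule rotate) simp_all
  show "mtrace (P * (R * P)) = mtrace (P * R)"
    using rotate[of P "R * P"] QP by (simp add: mat_mult_assoc P_idempotent)
  show "mtrace (R * (P * R)) = mtrace (P * R)"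
    using rotate[of R "P * R"] by (simp add: mat_mult_assoc R_idempotent)
  show QPQP: "mtrace (R * (P * (R * P))) = mtrace (P * (R * (P * R)))"
    using rotate[of R "P * (R * P)"] by (simp add: mat_mult_assoc)
  show "mtrace (P * (R * (P * (R * P)))) = mtrace (P * (R * (P * R)))"
    using rotate[of P "R * (P * (R * P))"] QPQP by (simp add: mat_mult_assoc P_idempotent)
  show "mtrace (R * (P * (R * (P * R)))) = mtrace (P * (R * (P * R)))"
    using rotate[of R "P * (R * (P * R))"] by (simp add: mat_mult_assoc R_idempotent)
  show "mtrace (R * (P * (R * (P * (R * P))))) = mtrace (P * (R * (P * (R * (P * R)))))"
    using rotate[of R "P * (R * (P * (R * P)))"] by (simp add: mat_mult_assoc)
qed

lemma mtrace_relation_defect_square: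
  fixes q :: complex
  defines "E \<equiv> P * (R * P) - R * (P * R) - q \<cdot>\<^sub>m D"
  shows "mtrace (E * E) =
    2 * mtrace (P * (R * (P * R))) - 2 * mtrace (P * (R * (P * (R * (P * R)))))
    - 4 * q * (mtrace (P * R) - mtrace (P * (R * (P * R)))) + q * q * (2 * of_nat N - 2 * mtrace (P * R))"
  unfolding E_def D_def
  by (simp add: mat_mult_diff_distrib_left mat_mult_diff_distrib_right mat_smult_mult_left
      mat_smult_mult_right mat_mult_assoc mtrace_diff mtrace_smult P_idempotent R_idempotent
      P_mult_P_mult R_mult_R_mult smult_smult_mat,
    simp add: mtrace_alternating_words mtrace_P mtrace_R,
    simp add: algebra_simps)

theorem relation_if_mtrace_A_powers:
  assumes real: "cnj q = q"
    and traces: "\<And>m. m \<in> {1, 2, 3} \<Longrightarrow> mtrace (A ^\<^sub>m m) = of_nat N + (q ^ m - 1) * k"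
  shows "P * R * P - R * P * R = q \<cdot>\<^sub>m D"
proof -
  define E where "E = P * (R * P) - R * (P * R) - q \<cdot>\<^sub>m D"
  have "madj E = E" unfolding E_def
    by (simp add: madj_mult madj_diff madj_smult P_hermitian R_hermitian D_hermitian real mat_mult_assoc)
  moreover have "mtrace (E * E) = 0"
  proof -
    have t1: "mtrace (P * R) = of_nat N + (q - 1) * k"
      and t2: "mtrace (P * (R * (P * R))) = of_nat N + (q ^ 2 - 1) * k"
      and t3: "mtrace (P * (R * (P * (R * (P * R))))) = of_nat N + (q ^ 3 - 1) * k"
      using traces[of 1] traces[of 2] traces[of 3] mtrace_A_powers by simp_all
    show ?thesis unfolding E_def mtrace_relation_defect_square t3 t2 t1
      by (simp add: algebra_simps power2_eq_square power3_eq_cube)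
  qed
  ultimately have E0: "E = 0\<^sub>m M M" using hermitian_eq_0_if_mtrace_square_eq_0[of E] unfolding E_def by simp
  show ?thesis
  proof (rule eq_matI)
    fix i j assume "i < dim_row (q \<cdot>\<^sub>m D)" "j < dim_col (q \<cdot>\<^sub>m D)"
    then have ij: "i < M" "j < M" by simp_all
    then have "E $$ (i, j) = 0" using E0 by simp
    then show "(P * R * P - R * P * R) $$ (i, j) = (q \<cdot>\<^sub>m D) $$ (i, j)"
      unfolding E_def using ij by (simp del: index_mult_mat add: index_mult_mat(2,3) mat_mult_assoc)
  qed simp_all
qed

end

section \<open>The projections of an orthonormal family\<close>

lemma index_msum_kron_munit:
  assumes B: "\<And>s m. B s m \<in> carrier_mat p p" and j: "j < r * p" and j': "j' < r * p"
  shows "msum (r * p) (r * p) (\<lambda>(s, m). kron (munit r s m) (B s m)) ({..<r} \<times> {..<r}) $$ (j, j')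
    = B (j div p) (j' div p) $$ (j mod p, j' mod p)"
proof -
  have "msum (r * p) (r * p) (\<lambda>(s, m). kron (munit r s m) (B s m)) ({..<r} \<times> {..<r}) $$ (j, j')
    = (\<Sum>x\<in>{..<r} \<times> {..<r}. (case x of (s, m) \<Rightarrow> kron (munit r s m) (B s m)) $$ (j, j'))"
    using j j' by simp
  also have "\<dots> = (\<Sum>x\<in>{..<r} \<times> {..<r}.
      if x = (j div p, j' div p) then B (fst x) (snd x) $$ (j mod p, j' mod p) else 0)"
    using carrier_matD[OF B] j j' less_mult_imp_div_less[OF j] less_mult_imp_div_less[OF j']
    by (intro sum.cong refl) (auto split: if_splits)
  also have "\<dots> = B (j div p) (j' div p) $$ (j mod p, j' mod p)"
    using less_mult_imp_div_less[OF j] less_mult_imp_div_less[OF j'] by simp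
  finally show ?thesis .
qed

lemma P1_eq_P2_if_trivial_sol:
  assumes "trivial_sol n P"
  shows "P1 n P = P2 n P"
proof (cases "P = 0\<^sub>m (n * n) (n * n)")
  case True
  show ?thesis
  proof (rule eq_matI)
    fix i j assume "i < dim_row (P2 n P)" "j < dim_col (P2 n P)"
    then have i: "i < n * (n * n)" and j: "j < n * (n * n)" unfolding P2_def True by simp_all
    then have "i < n * n * n" "j < n * n * n" by (simp_all add: mult.assoc)
    then show "P1 n P $$ (i, j) = P2 n P $$ (i, j)"
      unfolding P1_def P2_def True
      using less_mult_imp_div_less less_mult_imp_mod_less[OF i] less_mult_imp_mod_less[OF j] by simp
  qed (simp_all add: P1_def P2_def True mult.assoc)
next
  case False
  then have "P = 1\<^sub>m (n * n)" using assms unfolding trivial_sol_def by (simp add: kron_one)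
  then show ?thesis unfolding P1_def P2_def by (simp add: kron_one mult.assoc)
qed

lemma smult_of_real_square_eq_iff:
  fixes Q :: real
  assumes "Q \<noteq> 0"
  shows "(complex_of_real Q) ^ 2 \<cdot>\<^sub>m X = Y \<longleftrightarrow> X = complex_of_real (inverse Q ^ 2) \<cdot>\<^sub>m Y"
  using smult_mat_eq_iff[of "complex_of_real Q ^ 2" X Y] assms by (simp add: power_inverse)

locale orthonormal_family =
  fixes n r :: nat and V :: "nat \<Rightarrow> complex mat"
  assumes V_carrier: "\<And>s. s < r \<Longrightarrow> V s \<in> carrier_mat n n"
    and orthonormal: "\<And>s m. s < r \<Longrightarrow> m < r \<Longrightarrow> mtrace (madj (V s) * V m) = (if s = m then 1 else 0)"
begin

lemma V_dim [simp]: "s < r \<Longrightarrow> dim_row (V s) = n" "s < r \<Longrightarrow> dim_col (V s) = n"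
  using V_carrier by auto

lemma PT_dim [simp]: "dim_row (PT n r V) = n * n" "dim_col (PT n r V) = n * n"
  unfolding PT_def by simp_all

lemma PT_index:
  assumes k: "k < n * n" and k': "k' < n * n"
  shows "PT n r V $$ (k, k') = (\<Sum>s<r. V s $$ (k div n, k mod n) * cnj (V s $$ (k' div n, k' mod n)))"
proof -
  define t0 where "t0 = (k div n, k mod n, k' div n, k' mod n)"
  have bounds: "k div n < n" "k mod n < n" "k' div n < n" "k' mod n < n"
    using less_mult_imp_div_less[OF k] less_mult_imp_div_less[OF k']
      less_mult_imp_mod_less[OF k] less_mult_imp_mod_less[OF k'] by simp_all
  have "PT n r V $$ (k, k') = (\<Sum>(s, t)\<in>{..<r} \<times> ({..<n} \<times> {..<n} \<times> {..<n} \<times> {..<n}).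
      if t = t0 then V s $$ (k div n, k mod n) * cnj (V s $$ (k' div n, k' mod n)) else 0)"
    unfolding PT_def using k k' bounds by (simp, intro sum.cong refl) (auto simp: t0_def)
  also have "\<dots> = (\<Sum>s<r. V s $$ (k div n, k mod n) * cnj (V s $$ (k' div n, k' mod n)))"
    using bounds by (subst sum.cartesian_product') (simp add: t0_def)
  finally show ?thesis .
qed

definition Vvec :: "complex mat" where
  "Vvec = mat (n * n) r (\<lambda>(k, s). V s $$ (k div n, k mod n))"

lemma Vvec_dim [simp]: "dim_row Vvec = n * n" "dim_col Vvec = r"
  unfolding Vvec_def by simp_all

lemma Vvec_index [simp]: "k < n * n \<Longrightarrow> s < r \<Longrightarrow> Vvec $$ (k, s) = V s $$ (k div n, k mod n)"
  unfolding Vvec_def by simp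

lemma Vvec_carrier: "Vvec \<in> carrier_mat (n * n) r"
  by (intro carrier_matI) simp_all

lemma PT_eq: "PT n r V = Vvec * madj Vvec"
  by (rule eq_matI) (simp_all add: PT_index scalar_prod_def atLeast0LessThan)

lemma Vvec_isometry: "madj Vvec * Vvec = 1\<^sub>m r"
proof (rule eq_matI)
  fix s m assume "s < dim_row (1\<^sub>m r)" "m < dim_col (1\<^sub>m r)"
  then have s: "s < r" and m: "m < r" by simp_all
  have "(madj Vvec * Vvec) $$ (s, m) = (\<Sum>k<n * n. cnj (Vvec $$ (k, s)) * Vvec $$ (k, m))"
    using s m by (intro index_madj_mult) (simp_all add: carrier_matI)
  also have "\<dots> = (\<Sum>a<n. \<Sum>b<n. cnj (V s $$ (a, b)) * V m $$ (a, b))"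
    using s m by (simp add: sum_lessThan_mult)
  also have "\<dots> = mtrace (madj (V s) * V m)"
    unfolding mtrace_def using s m by (subst sum.swap) (simp add: scalar_prod_def atLeast0LessThan)
  finally show "(madj Vvec * Vvec) $$ (s, m) = 1\<^sub>m r $$ (s, m)" using orthonormal s m by simp
qed simp_all

definition W :: "complex mat" where "W = kron Vvec (1\<^sub>m n)"

lemma W_dim [simp]: "dim_row W = n * n * n" "dim_col W = r * n"
  unfolding W_def by simp_all

lemma P1_eq: "P1 n (PT n r V) = W * madj W"
  unfolding P1_def W_def PT_eq madj_kron madj_one by (subst kron_mult) simp_all

lemma W_isometry: "madj W * W = 1\<^sub>m (r * n)"
  unfolding W_def madj_kron madj_one by (subst kron_mult) (simp_all add: Vvec_isometry kron_one)

text \<open>\<open>U\<close> is \<open>1\<^sub>m n \<otimes> Vvec\<close> with its columns reordered from \<open>(a, s)\<close> to \<open>(s, a)\<close>,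
  the block order of \<open>AT n r V\<close>.\<close>

definition U :: "complex mat" where
  "U = mat (n * n * n) (r * n)
     (\<lambda>(i, j). if i div (n * n) = j mod n then Vvec $$ (i mod (n * n), j div n) else 0)"

lemma U_dim [simp]: "dim_row U = n * n * n" "dim_col U = r * n"
  unfolding U_def by simp_all

lemma U_index [simp]:
  "i < n * n * n \<Longrightarrow> j < r * n \<Longrightarrow>
   U $$ (i, j) = (if i div (n * n) = j mod n then Vvec $$ (i mod (n * n), j div n) else 0)"
  unfolding U_def by simp

lemma U_carrier: "U \<in> carrier_mat (n * n * n) (r * n)"
  by (simp add: carrier_matI)

lemma P2_eq: "P2 n (PT n r V) = U * madj U"
proof (rule eq_matI)
  fix i i' assume "i < dim_row (U * madj U)" "i' < dim_col (U * madj U)"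
  then have i: "i < n * n * n" and i': "i' < n * n * n" by simp_all
  then have "i < n * (n * n)" "i' < n * (n * n)" by (simp_all add: mult.assoc)
  note bounds = less_mult_imp_div_less[OF this(1)] less_mult_imp_div_less[OF this(2)]
    less_mult_imp_mod_less[OF this(1)] less_mult_imp_mod_less[OF this(2)]
  define c where "c s = (if i div (n * n) = i' div (n * n)
    then Vvec $$ (i mod (n * n), s) * cnj (Vvec $$ (i' mod (n * n), s)) else 0)" for s
  have "(U * madj U) $$ (i, i') = (\<Sum>j<r * n. U $$ (i, j) * cnj (U $$ (i', j)))"
    using i i' by (intro index_mult_madj) (simp_all add: carrier_matI)
  also have "\<dots> = (\<Sum>s<r. \<Sum>y<n. U $$ (i, s * n + y) * cnj (U $$ (i', s * n + y)))"
    by (rule sum_lessThan_mult)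
  also have "\<dots> = (\<Sum>s<r. \<Sum>y<n. if y = i div (n * n) then c s else 0)"
    using i i' unfolding c_def by (intro sum.cong refl) (auto simp: mult_add_less_mult)
  also have "\<dots> = (\<Sum>s<r. c s)" using bounds by simp
  also have "\<dots> = P2 n (PT n r V) $$ (i, i')"
    unfolding P2_def PT_eq c_def using i i' bounds by (simp add: scalar_prod_def atLeast0LessThan mult.assoc)
  finally show "P2 n (PT n r V) $$ (i, i') = (U * madj U) $$ (i, i')" by simp
qed (simp_all add: P2_def mult.assoc)

lemma U_isometry: "madj U * U = 1\<^sub>m (r * n)"
proof (rule eq_matI)
  fix j j' assume "j < dim_row (1\<^sub>m (r * n))" "j' < dim_col (1\<^sub>m (r * n))"
  then have j: "j < r * n" and j': "j' < r * n" by simp_all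
  note bounds = less_mult_imp_div_less[OF j] less_mult_imp_div_less[OF j']
    less_mult_imp_mod_less[OF j] less_mult_imp_mod_less[OF j']
  define c where "c k = (if j mod n = j' mod n
    then cnj (Vvec $$ (k, j div n)) * Vvec $$ (k, j' div n) else 0)" for k
  have "(madj U * U) $$ (j, j') = (\<Sum>i<n * (n * n). cnj (U $$ (i, j)) * U $$ (i, j'))"
    using j j' by (intro index_madj_mult) (simp_all add: carrier_matI mult.assoc)
  also have "\<dots> = (\<Sum>x<n. \<Sum>k<n * n. cnj (U $$ (x * (n * n) + k, j)) * U $$ (x * (n * n) + k, j'))"
    by (rule sum_lessThan_mult)
  also have "\<dots> = (\<Sum>x<n. \<Sum>k<n * n. if x = j mod n then c k else 0)"
    using j j' unfolding c_def by (intro sum.cong refl) (auto simp: mult_add_less_mult mult.assoc)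
  also have "\<dots> = (\<Sum>k<n * n. c k)" using bounds by (subst sum.swap) simp
  also have "\<dots> = (if j mod n = j' mod n then (madj Vvec * Vvec) $$ (j div n, j' div n) else 0)"
    unfolding c_def using bounds by (simp add: scalar_prod_def atLeast0LessThan)
  also have "\<dots> = 1\<^sub>m (r * n) $$ (j, j')"
  proof -
    have "j = j' \<longleftrightarrow> j div n = j' div n \<and> j mod n = j' mod n" by (metis div_mult_mod_eq)
    then show ?thesis unfolding Vvec_isometry using j j' bounds by auto
  qed
  finally show "(madj U * U) $$ (j, j') = 1\<^sub>m (r * n) $$ (j, j')" .
qed simp_all

definition G :: "complex mat" where
  "G = mat (r * n) (r * n) (\<lambda>(j, l). (V (l div n) * mcnj (V (j div n))) $$ (j mod n, l mod n))"

lemma G_dim [simp]: "dim_row G = r * n" "dim_col G = r * n"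
  unfolding G_def by simp_all

lemma U_index_digits:
  assumes x: "x < n" and a: "a < n" and b: "b < n" and j: "j < r * n"
  shows "U $$ ((x * n + a) * n + b, j) = (if x = j mod n then V (j div n) $$ (a, b) else 0)"
proof -
  have ab: "a * n + b < n * n" using a b by (rule mult_add_less_mult)
  have i: "(x * n + a) * n + b < n * n * n" using x a b by (intro mult_add_less_mult) simp_all
  have e: "(x * n + a) * n + b = x * (n * n) + (a * n + b)" by (simp add: algebra_simps)
  have "((x * n + a) * n + b) div (n * n) = x" "((x * n + a) * n + b) mod (n * n) = a * n + b"
    unfolding e by (rule mult_add_div_mod[OF ab])+
  then show ?thesis using i j ab b less_mult_imp_div_less[OF j]
    by (simp only: U_index) (simp add: mult_add_div_mod[OF b])
qed

lemma W_index_digits: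
  assumes x: "x < n" and a: "a < n" and b: "b < n" and l: "l < r * n"
  shows "W $$ ((x * n + a) * n + b, l) = (if b = l mod n then V (l div n) $$ (x, a) else 0)"
proof -
  have "x * n + a < n * n" using x a by (rule mult_add_less_mult)
  moreover have "(x * n + a) * n + b < n * n * n" using x a b by (intro mult_add_less_mult) simp_all
  ultimately show ?thesis unfolding W_def using b l less_mult_imp_div_less[OF l] less_mult_imp_mod_less[OF l]
    mult_add_div_mod[OF b] mult_add_div_mod[OF a] by simp
qed

lemma madj_U_mult_W: "madj U * W = G"
proof (rule eq_matI)
  fix j l assume "j < dim_row G" "l < dim_col G"
  then have j: "j < r * n" and l: "l < r * n" by simp_all
  note bounds = less_mult_imp_div_less[OF j] less_mult_imp_div_less[OF l]
    less_mult_imp_mod_less[OF j] less_mult_imp_mod_less[OF l]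
  have "(madj U * W) $$ (j, l) = (\<Sum>i<n * n * n. cnj (U $$ (i, j)) * W $$ (i, l))"
    using j l by (intro index_madj_mult) (simp_all add: carrier_matI)
  also have "\<dots> = (\<Sum>x<n. \<Sum>a<n. \<Sum>b<n.
      cnj (U $$ ((x * n + a) * n + b, j)) * W $$ ((x * n + a) * n + b, l))"
    by (simp only: sum_lessThan_mult)
  also have "\<dots> = (\<Sum>x<n. \<Sum>a<n. \<Sum>b<n. if b = l mod n then
      (if x = j mod n then cnj (V (j div n) $$ (a, b)) * V (l div n) $$ (x, a) else 0) else 0)"
    using j l by (intro sum.cong refl) (simp add: U_index_digits W_index_digits)
  also have "\<dots> = (\<Sum>a<n. cnj (V (j div n) $$ (a, l mod n)) * V (l div n) $$ (j mod n, a))"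
    using bounds by (simp, subst sum.swap, simp)
  also have "\<dots> = G $$ (j, l)"
    unfolding G_def using j l bounds by (simp add: scalar_prod_def atLeast0LessThan mult.commute)
  finally show "(madj U * W) $$ (j, l) = G $$ (j, l)" .
qed simp_all

lemma AT_index:
  assumes j: "j < r * n" and j': "j' < r * n"
  shows "AT n r V $$ (j, j') =
    (\<Sum>i<r. (V i * mcnj (V (j div n)) * transpose_mat (V (j' div n)) * madj (V i)) $$ (j mod n, j' mod n))"
proof -
  define B where "B s m = msum n n (\<lambda>i. V i * mcnj (V s) * transpose_mat (V m) * madj (V i)) {..<r}" for s m
  have "\<And>s m. B s m \<in> carrier_mat n n" unfolding B_def by (intro carrier_matI) simp_all
  then have "AT n r V $$ (j, j') = B (j div n) (j' div n) $$ (j mod n, j' mod n)"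
    unfolding AT_def B_def[symmetric] by (rule index_msum_kron_munit[OF _ j j'])
  then show ?thesis unfolding B_def using less_mult_imp_mod_less[OF j] less_mult_imp_mod_less[OF j'] by simp
qed

lemma AT_eq: "AT n r V = G * madj G"
proof (rule eq_matI)
  fix j j' assume "j < dim_row (G * madj G)" "j' < dim_col (G * madj G)"
  then have j: "j < r * n" and j': "j' < r * n" by simp_all
  note bounds = less_mult_imp_div_less[OF j] less_mult_imp_div_less[OF j']
    less_mult_imp_mod_less[OF j] less_mult_imp_mod_less[OF j']
  define F where "F i s = V i * mcnj (V s)" for i s
  have F: "F i s \<in> carrier_mat n n" if "i < r" "s < r" for i s
    unfolding F_def using that by (intro carrier_matI) simp_all
  have "(G * madj G) $$ (j, j') = (\<Sum>l<r * n. G $$ (j, l) * cnj (G $$ (j', l)))"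
    using j j' by (intro index_mult_madj[of _ "r * n"]) (simp_all add: carrier_matI)
  also have "\<dots> = (\<Sum>i<r. \<Sum>z<n. G $$ (j, i * n + z) * cnj (G $$ (j', i * n + z)))"
    by (rule sum_lessThan_mult)
  also have "\<dots> = (\<Sum>i<r. (F i (j div n) * madj (F i (j' div n))) $$ (j mod n, j' mod n))"
  proof (intro sum.cong refl)
    fix i assume "i \<in> {..<r}"
    then have i: "i < r" by simp
    have "(\<Sum>z<n. G $$ (j, i * n + z) * cnj (G $$ (j', i * n + z))) =
          (\<Sum>z<n. F i (j div n) $$ (j mod n, z) * cnj (F i (j' div n) $$ (j' mod n, z)))"
      using i j j' unfolding G_def F_def by (intro sum.cong refl) (simp add: mult_add_less_mult)
    then show "(\<Sum>z<n. G $$ (j, i * n + z) * cnj (G $$ (j', i * n + z))) =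
        (F i (j div n) * madj (F i (j' div n))) $$ (j mod n, j' mod n)"
      using index_mult_madj[OF F[OF i bounds(1)] F[OF i bounds(2)]] bounds by simp
  qed
  also have "\<dots> = (\<Sum>i<r. (V i * mcnj (V (j div n)) * transpose_mat (V (j' div n)) * madj (V i)) $$ (j mod n, j' mod n))"
    unfolding F_def using bounds by (intro sum.cong refl) (simp add: madj_mult madj_mcnj mat_mult_assoc)
  also have "\<dots> = AT n r V $$ (j, j')" using AT_index[OF j j'] ..
  finally show "AT n r V $$ (j, j') = (G * madj G) $$ (j, j')" by (rule sym)
qed (simp_all add: AT_def)

lemma PT_carrier: "PT n r V \<in> carrier_mat (n * n) (n * n)"
  by (intro carrier_matI) simp_all

lemma PT_hermitian: "madj (PT n r V) = PT n r V"
  and PT_idempotent: "PT n r V * PT n r V = PT n r V"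
  unfolding PT_eq using isometry_projection[OF Vvec_carrier Vvec_isometry] by simp_all

lemma AT_eq_compression: "AT n r V = madj U * P1 n (PT n r V) * U"
proof -
  have "madj U * P1 n (PT n r V) * U = (madj U * W) * madj (madj U * W)"
    unfolding P1_eq by (simp add: madj_mult mat_mult_assoc)
  then show ?thesis unfolding madj_U_mult_W AT_eq by simp
qed

end

sublocale orthonormal_family \<subseteq> pp: projection_pair "n * n * n" "r * n" "P1 n (PT n r V)" "P2 n (PT n r V)" U
proof unfold_locales
  show "P1 n (PT n r V) \<in> carrier_mat (n * n * n) (n * n * n)"
    unfolding P1_def by (intro carrier_matI) simp_all
  show "U \<in> carrier_mat (n * n * n) (r * n)" by (intro carrier_matI) simp_all
  have W: "W \<in> carrier_mat (n * n * n) (r * n)" by (intro carrier_matI) simp_all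
  show "madj (P1 n (PT n r V)) = P1 n (PT n r V)"
    and "P1 n (PT n r V) * P1 n (PT n r V) = P1 n (PT n r V)"
    and "mtrace (P1 n (PT n r V)) = of_nat (r * n)"
    unfolding P1_eq using isometry_projection[OF W W_isometry] by simp_all
qed (simp_all add: U_isometry P2_eq)

context orthonormal_family
begin

lemma A_eq_AT: "pp.A = AT n r V"
  unfolding pp.A_def AT_eq_compression ..

lemma mtrace_AT_if_trivial:
  assumes "trivial_sol n (PT n r V)"
  shows "mtrace (AT n r V) = of_nat (r * n)"
proof -
  have "pp.D = 0\<^sub>m (n * n * n) (n * n * n)"
    unfolding pp.D_def unfolding P1_eq_P2_if_trivial_sol[OF assms] by (intro eq_matI) simp_all
  then have "mtrace (pp.D * pp.D) = 0" by (simp add: mtrace_def)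
  then show ?thesis using pp.mtrace_D_square pp.mtrace_A A_eq_AT by simp
qed

lemma is_solution_PT_iff:
  assumes "Q \<noteq> 0"
  shows "is_solution n Q (PT n r V) \<longleftrightarrow>
    P1 n (PT n r V) * P2 n (PT n r V) * P1 n (PT n r V) - P2 n (PT n r V) * P1 n (PT n r V) * P2 n (PT n r V)
      = complex_of_real (inverse Q ^ 2) \<cdot>\<^sub>m pp.D"
  unfolding is_solution_def pp.D_def smult_of_real_square_eq_iff[OF assms]
  using PT_carrier PT_hermitian PT_idempotent by simp

lemma mtrace_AT_power_if_solution:
  assumes "Q > 0" and "is_solution n Q (PT n r V)"
  shows "mtrace (AT n r V ^\<^sub>m m) = complex_of_real (real (r * n) + (inverse Q ^ (2 * m) - 1) *
    (real (mrank (P1 n (PT n r V) - P2 n (PT n r V))) / 2))"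
  using pp.mtrace_A_power_if_relation[of _ m] assms is_solution_PT_iff[of Q]
  unfolding A_eq_AT pp.D_def by (simp add: power_mult)

lemma nontrivial_solution_if_mtrace_AT_powers:
  assumes "Q > 1" and "k > 0"
    and traces: "\<forall>m\<in>{1, 2, 3}. mtrace (AT n r V ^\<^sub>m m) =
      complex_of_real (real (r * n) + (inverse Q ^ (2 * m) - 1) * real k)"
  shows "nontrivial_solution n Q (PT n r V)"
proof -
  define q where "q = complex_of_real (inverse Q ^ 2)"
  have traces_q: "mtrace (pp.A ^\<^sub>m m) = of_nat (r * n) + (q ^ m - 1) * of_nat k" if "m \<in> {1, 2, 3}" for m
  proof -
    have "mtrace (AT n r V ^\<^sub>m m) = complex_of_real (real (r * n) + (inverse Q ^ (2 * m) - 1) * real k)"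
      using traces that by blast
    then show ?thesis unfolding A_eq_AT q_def by (simp add: power_mult)
  qed
  have "0 < inverse Q" "inverse Q < 1" using \<open>Q > 1\<close> by (simp_all add: inverse_less_1_iff)
  then have "inverse Q ^ 2 < 1" using mult_strict_mono[of "inverse Q" 1 "inverse Q" 1] by (simp add: power2_eq_square)
  then have "q \<noteq> 1" unfolding q_def by (metis of_real_eq_1_iff less_irrefl)
  then have "mtrace (AT n r V) \<noteq> of_nat (r * n)"
    using traces_q[of 1] \<open>k > 0\<close> unfolding A_eq_AT by (simp add: left_mult_one_mat')
  then have "\<not> trivial_sol n (PT n r V)" using mtrace_AT_if_trivial by blast
  moreover have "is_solution n Q (PT n r V)"
    using is_solution_PT_iff[of Q] pp.relation_if_mtrace_A_powers[of q k] traces_q \<open>Q > 1\<close>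
    unfolding q_def by simp
  ultimately show ?thesis unfolding nontrivial_solution_def by blast
qed

end

theorem proposition5:
  fixes n r :: nat and V :: "nat \<Rightarrow> complex mat"
  assumes "n \<ge> 2" and "r \<ge> 1"
    and "\<And>s. s < r \<Longrightarrow> V s \<in> carrier_mat n n"
    and "\<And>s m. s < r \<Longrightarrow> m < r \<Longrightarrow> mtrace (madj (V s) * V m) = (if s = m then 1 else 0)"
  shows "(\<forall>Q::real. Q > 0 \<longrightarrow> nontrivial_solution n Q (PT n r V) \<longrightarrow>
            (\<forall>m::nat. m \<ge> 1 \<longrightarrow>
               mtrace (AT n r V ^\<^sub>m m) =
                 complex_of_real (real (r*n) + ((inverse Q)^(2*m) - 1) *
                   (real (mrank (P1 n (PT n r V) - P2 n (PT n r V))) / 2))))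
       \<and> (\<forall>Q::real. \<forall>k::nat. Q > 1 \<longrightarrow> k > 0 \<longrightarrow>
            (\<forall>m\<in>{1,2,3::nat}. mtrace (AT n r V ^\<^sub>m m) =
                 complex_of_real (real (r*n) + ((inverse Q)^(2*m) - 1) * real k))
            \<longrightarrow> nontrivial_solution n Q (PT n r V))"
proof -
  interpret orthonormal_family n r V using assms(3,4) by unfold_locales
  show ?thesis
    using mtrace_AT_power_if_solution nontrivial_solution_if_mtrace_AT_powers
    unfolding nontrivial_solution_def by blast
qed

end
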